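(* Let $\mathfrak{T}:\Omega\to\mathcal{LP}$ be the map $\omega\mapsto\mathsf{E}_\omega$. Then the pushforward map $\mathfrak{T}_*:\mathcal{M}_p(\Omega)\to\mathcal{M}_p(\mathcal{LP})$, $\nu\mapsto\nu(\mathfrak{T}^{-1}(\cdot))$, is well-defined and is a bijection.
   Context: $\Omega$ is the set of $\omega=(\alpha^+,\alpha^-,\gamma_1,\gamma_2)$ with $\alpha^\pm=(\alpha_1^\pm\ge\alpha_2^\pm\ge\dots\ge0)$, $\sum_i(\alpha_i^+)^2+\sum_i(\alpha_i^-)^2<\infty$, $\gamma_1\in\mathbb{R}$, $\gamma_2\ge0$; it is topologised by coordinate-wise convergence of $(\alpha^+,\alpha^-,\gamma_1,\delta)$ with $\delta=\gamma_2+\sum_i(\alpha_i^+)^2+\sum_i(\alpha_i^-)^2$. For $\omega\in\Omega$, $\mathsf{E}_\omega(z)=e^{-\gamma_1 z-\frac{\gamma_2}{2}z^2}\prod_{i}e^{z\alpha_i^+}(1-z\alpha_i^+)\prod_{i}e^{-z\alpha_i^-}(1+z\alpha_i^-)$; $\mathcal{LP}=\{\mathsf{E}_\omega:\omega\in\Omega\}$ with the topology of uniform convergence on compact subsets of $\mathbb{C}$. For a topological space $\mathfrak{X}$, $\mathcal{M}_p(\mathfrak{X})$ is the set of Borel probability measures on $\mathfrak{X}$. *)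

theory Defs
  imports "HOL-Analysis.Analysis" "HOL-Probability.Probability"
begin

text \<open>A point omega = (alpha+, alpha-, gamma1, gamma2); sequences indexed from 0.\<close>
type_synonym omega = "(nat \<Rightarrow> real) \<times> (nat \<Rightarrow> real) \<times> real \<times> real"

definition Omega :: "omega set" where
  "Omega = {(ap, am, g1, g2).
      antimono ap \<and> (\<forall>i. ap i \<ge> 0) \<and> antimono am \<and> (\<forall>i. am i \<ge> 0) \<and>
      summable (\<lambda>i. (ap i)\<^sup>2) \<and> summable (\<lambda>i. (am i)\<^sup>2) \<and> g2 \<ge> 0}"

definition delta :: "omega \<Rightarrow> real" where
  "delta \<omega> = (case \<omega> of (ap, am, g1, g2) \<Rightarrow>
      g2 + (\<Sum>i. (ap i)\<^sup>2) + (\<Sum>i. (am i)\<^sup>2))"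

text \<open>Embedding omega |-> (alpha+, alpha-, gamma1, delta); the product type carries
  the product topology (coordinatewise convergence).\<close>
definition Omega_coords :: "omega \<Rightarrow> (nat \<Rightarrow> real) \<times> (nat \<Rightarrow> real) \<times> real \<times> real" where
  "Omega_coords \<omega> = (case \<omega> of (ap, am, g1, g2) \<Rightarrow> (ap, am, g1, delta \<omega>))"

definition Omega_top :: "omega topology" where
  "Omega_top = pullback_topology Omega Omega_coords euclidean"

definition E :: "omega \<Rightarrow> complex \<Rightarrow> complex" where
  "E \<omega> z = (case \<omega> of (ap, am, g1, g2) \<Rightarrow>
      exp (- of_real g1 * z - of_real g2 / 2 * z\<^sup>2)
      * (\<Prod>i. exp (z * of_real (ap i)) * (1 - z * of_real (ap i)))
      * (\<Prod>i. exp (- z * of_real (am i)) * (1 + z * of_real (am i))))"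

definition LP :: "(complex \<Rightarrow> complex) set" where
  "LP = E ` Omega"

definition uc_nbhd :: "(complex \<Rightarrow> complex) \<Rightarrow> complex set \<Rightarrow> real \<Rightarrow> (complex \<Rightarrow> complex) set" where
  "uc_nbhd f K e = {g. \<exists>d<e. \<forall>z\<in>K. cmod (g z - f z) \<le> d}"

definition compact_uniform_top :: "(complex \<Rightarrow> complex) topology" where
  "compact_uniform_top = topology_generated_by {uc_nbhd f K e | f K e. compact K \<and> e > 0}"

definition LP_top :: "(complex \<Rightarrow> complex) topology" where
  "LP_top = subtopology compact_uniform_top LP"

definition borel_of :: "'a topology \<Rightarrow> 'a measure" where
  "borel_of X = sigma (topspace X) {U. openin X U}"

definition Mp :: "'a topology \<Rightarrow> 'a measure set" where
  "Mp X = {M. sets M = sets (borel_of X) \<and> prob_space M}"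

end

theory Submission
  imports Defs "HOL-Complex_Analysis.Weierstrass_Factorization"
begin

text \<open>
  A continuous bijection from a \<sigma>-compact space onto a Hausdorff space is a Borel isomorphism:
  a closed set is a countable union of compact sets, whose images are compact and hence closed.
  Push-forward along a Borel isomorphism is a bijection of probability measures, its inverse
  being push-forward along the inverse map. So it suffices to show that \<open>\<Omega>\<close> is \<sigma>-compact and
  that \<open>\<omega> \<mapsto> E\<^sub>\<omega>\<close> is a continuous injection.

  The sets \<open>|\<gamma>\<^sub>1| \<le> n, \<delta> \<le> n\<close> exhaust \<open>\<Omega>\<close> and are compact: their coordinates \<open>\<alpha>\<^sup>\<plusminus>\<close> are
  nonincreasing sequences with square sum at most \<open>n\<close>, a compact set in the product topology.
  Moving the Gaussian parts of the genus-one factors into the exponent,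
  \<open>E\<^sub>\<omega>(z) = exp(-\<gamma>\<^sub>1 z - \<delta> z\<^sup>2/2) P(\<alpha>\<^sup>+, z) P(\<alpha>\<^sup>-, -z)\<close> with \<open>P\<close> the genus-two canonical
  product; since \<open>\<alpha>\<^sub>k\<^sup>2 \<le> \<delta>/(k+1)\<close>, the factors of \<open>P\<close> differ from 1 by \<open>O(k powr (-3/2))\<close>
  uniformly, so \<open>P\<close> is jointly continuous and \<open>E\<close> is continuous for uniform convergence on compacta.

  For injectivity, the smallest positive real zero of \<open>E\<^sub>\<omega>\<close> is \<open>1/\<alpha>\<^sup>+\<^sub>1\<close> and the largest negative one
  is \<open>-1/\<alpha>\<^sup>-\<^sub>1\<close>. Dividing out the two leading factors, which vanish only at these points,
  and using continuity determines the remaining coefficients inductively; finally \<open>\<gamma>\<^sub>1\<close> and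
  \<open>\<gamma>\<^sub>2\<close> are read off from \<open>E\<^sub>\<omega>\<close> at two small real points.
\<close>

section \<open>Borel isomorphisms\<close>

lemma space_borel_of [simp]: "space (borel_of X) = topspace X"
  unfolding borel_of_def by (rule space_measure_of) (auto dest: openin_subset)

lemma sets_borel_of: "sets (borel_of X) = sigma_sets (topspace X) {U. openin X U}"
  unfolding borel_of_def by (rule sets_measure_of) (auto dest: openin_subset)

lemma sets_borel_of_openin: "openin X U \<Longrightarrow> U \<in> sets (borel_of X)"
  by (simp add: sets_borel_of)

lemma sets_borel_of_closedin:
  assumes "closedin X C"
  shows "C \<in> sets (borel_of X)"
proof -
  have "topspace X - (topspace X - C) \<in> sets (borel_of X)"
    using assms by (intro sets.compl_sets[where M = "borel_of X", simplified] sets_borel_of_openin) auto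
  with closedin_subset[OF assms] show ?thesis
    by (simp add: Diff_Diff_Int inf_absorb2)
qed

lemma measurable_borel_of_continuous_map:
  assumes "continuous_map X Y f"
  shows "f \<in> borel_of X \<rightarrow>\<^sub>M borel_of Y"
  unfolding borel_of_def[of Y]
proof (rule measurable_measure_of)
  show "f \<in> space (borel_of X) \<rightarrow> topspace Y"
    using assms by (auto simp: continuous_map_def)
  fix U assume "U \<in> {U. openin Y U}"
  then have "openin X {x \<in> topspace X. f x \<in> U}"
    using openin_continuous_map_preimage[OF assms] by simp
  moreover have "{x \<in> topspace X. f x \<in> U} = f -` U \<inter> space (borel_of X)"
    by auto
  ultimately show "f -` U \<inter> space (borel_of X) \<in> sets (borel_of X)"
    by (simp add: sets_borel_of_openin)
qed (auto dest: openin_subset)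

lemma sets_borel_of_image_closedin:
  assumes f: "continuous_map X Y f" and K: "\<And>n::nat. compactin X (K n)"
    and X: "(\<Union>n. K n) = topspace X" and Y: "Hausdorff_space Y" and C: "closedin X C"
  shows "f ` C \<in> sets (borel_of Y)"
proof -
  have "f ` (C \<inter> K n) \<in> sets (borel_of Y)" for n
  proof -
    have "compactin X (C \<inter> K n)"
      using C K by (rule closed_Int_compactin)
    then show ?thesis
      using f Y by (intro sets_borel_of_closedin compactin_imp_closedin image_compactin)
  qed
  moreover have "f ` C = (\<Union>n. f ` (C \<inter> K n))"
    using closedin_subset[OF C] X by blast
  ultimately show ?thesis
    by (simp add: image_subset_iff sets.countable_UN)
qed

lemma sets_borel_of_image:
  assumes f: "continuous_map X Y f" and bij: "bij_betw f (topspace X) (topspace Y)"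
    and K: "\<And>n::nat. compactin X (K n)" and X: "(\<Union>n. K n) = topspace X"
    and Y: "Hausdorff_space Y" and A: "A \<in> sets (borel_of X)"
  shows "f ` A \<in> sets (borel_of Y)"
proof -
  have compl: "f ` (topspace X - B) = topspace Y - f ` B" if "B \<subseteq> topspace X" for B
  proof -
    have "f ` (topspace X - B) = f ` topspace X - f ` B"
      using bij_betw_imp_inj_on[OF bij] that by (intro inj_on_image_set_diff) auto
    then show ?thesis
      using bij_betw_imp_surj_on[OF bij] by simp
  qed
  have compl_sets: "topspace Y - B \<in> sets (borel_of Y)" if "B \<in> sets (borel_of Y)" for B
    using sets.compl_sets[OF that] by simp
  from A have "A \<in> sigma_sets (topspace X) {U. openin X U}"
    by (simp add: sets_borel_of)
  then show ?thesis
  proof induction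
    case (Basic U)
    then have "closedin X (topspace X - U)" and U: "U \<subseteq> topspace X"
      by (simp_all add: closedin_diff openin_subset)
    then have "f ` (topspace X - U) \<in> sets (borel_of Y)"
      by (intro sets_borel_of_image_closedin[OF f K X Y])
    with compl[of "topspace X - U"] U show ?case
      using compl_sets by (simp add: Diff_Diff_Int inf_absorb2)
  next
    case (Compl B)
    have "B \<subseteq> topspace X"
      using Compl.hyps by (rule sigma_sets_into_sp[rotated]) (auto dest: openin_subset)
    with Compl.IH show ?case
      using compl compl_sets by simp
  next
    case (Union B)
    then show ?case
      unfolding image_UN by (intro sets.countable_UN) blast
  qed simp
qed

lemma measurable_inv_into_borel_of:
  assumes f: "continuous_map X Y f" and bij: "bij_betw f (topspace X) (topspace Y)"
    and K: "\<And>n::nat. compactin X (K n)" and X: "(\<Union>n. K n) = topspace X"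
    and Y: "Hausdorff_space Y"
  shows "inv_into (topspace X) f \<in> borel_of Y \<rightarrow>\<^sub>M borel_of X"
proof (rule measurableI)
  show "inv_into (topspace X) f y \<in> space (borel_of X)" if "y \<in> space (borel_of Y)" for y
    using that bij_betw_imp_surj_on[OF bij] by (auto intro: inv_into_into)
  fix A assume A: "A \<in> sets (borel_of X)"
  then have "A \<subseteq> topspace X"
    using sets.sets_into_space by fastforce
  have "inv_into (topspace X) f -` A \<inter> space (borel_of Y) = f ` A"
  proof (intro set_eqI iffI)
    fix y assume y: "y \<in> inv_into (topspace X) f -` A \<inter> space (borel_of Y)"
    then have "y = f (inv_into (topspace X) f y)"
      using bij_betw_inv_into_right[OF bij] by simp
    with y show "y \<in> f ` A"
      by blast
  next
    fix y assume "y \<in> f ` A"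
    then obtain x where "x \<in> A" "y = f x"
      by blast
    with \<open>A \<subseteq> topspace X\<close> show "y \<in> inv_into (topspace X) f -` A \<inter> space (borel_of Y)"
      using bij_betw_inv_into_left[OF bij] bij_betw_apply[OF bij] by auto
  qed
  then show "inv_into (topspace X) f -` A \<inter> space (borel_of Y) \<in> sets (borel_of Y)"
    using sets_borel_of_image[OF f bij K X Y A] by simp
qed

lemma distr_distr_inverse:
  assumes f: "f \<in> M \<rightarrow>\<^sub>M N" and g: "g \<in> N \<rightarrow>\<^sub>M M"
    and gf: "\<And>x. x \<in> space M \<Longrightarrow> g (f x) = x" and \<mu>: "sets \<mu> = sets M"
  shows "distr (distr \<mu> N f) M g = \<mu>"
proof -
  have "f \<in> \<mu> \<rightarrow>\<^sub>M N"
    using f measurable_cong_sets[OF \<mu> refl[of "sets N"]] by simp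
  then have "distr (distr \<mu> N f) M g = distr \<mu> M (g \<circ> f)"
    by (rule distr_distr[OF g])
  also have "\<dots> = distr \<mu> M (\<lambda>x. x)"
    using gf sets_eq_imp_space_eq[OF \<mu>] by (intro distr_cong) auto
  also have "\<dots> = \<mu>"
    using \<mu> by (simp add: distr_id2)
  finally show ?thesis .
qed

lemma distr_in_prob_spaces:
  assumes "f \<in> M \<rightarrow>\<^sub>M N" and "\<mu> \<in> {\<mu>. sets \<mu> = sets M \<and> prob_space \<mu>}"
  shows "distr \<mu> N f \<in> {\<nu>. sets \<nu> = sets N \<and> prob_space \<nu>}"
proof -
  have "f \<in> \<mu> \<rightarrow>\<^sub>M N"
    using assms measurable_cong_sets[of \<mu> M N N] by simp
  then show ?thesis
    using assms(2) by (simp add: prob_space.prob_space_distr)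
qed

lemma bij_betw_distr_prob_space:
  assumes f: "f \<in> M \<rightarrow>\<^sub>M N" and g: "g \<in> N \<rightarrow>\<^sub>M M"
    and gf: "\<And>x. x \<in> space M \<Longrightarrow> g (f x) = x" and fg: "\<And>y. y \<in> space N \<Longrightarrow> f (g y) = y"
  shows "bij_betw (\<lambda>\<mu>. distr \<mu> N f)
    {\<mu>. sets \<mu> = sets M \<and> prob_space \<mu>} {\<nu>. sets \<nu> = sets N \<and> prob_space \<nu>}"
proof (rule bij_betwI[where g = "\<lambda>\<nu>. distr \<nu> M g"])
  show "distr (distr \<mu> N f) M g = \<mu>" if "\<mu> \<in> {\<mu>. sets \<mu> = sets M \<and> prob_space \<mu>}" for \<mu>
    using that by (intro distr_distr_inverse[OF f g gf]) auto
  show "distr (distr \<nu> M g) N f = \<nu>" if "\<nu> \<in> {\<nu>. sets \<nu> = sets N \<and> prob_space \<nu>}" for \<nu>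
    using that by (intro distr_distr_inverse[OF g f fg]) auto
  show "(\<lambda>\<mu>. distr \<mu> N f) \<in> {\<mu>. sets \<mu> = sets M \<and> prob_space \<mu>} \<rightarrow> {\<nu>. sets \<nu> = sets N \<and> prob_space \<nu>}"
    using distr_in_prob_spaces[OF f] by (rule funcsetI)
  show "(\<lambda>\<nu>. distr \<nu> M g) \<in> {\<nu>. sets \<nu> = sets N \<and> prob_space \<nu>} \<rightarrow> {\<mu>. sets \<mu> = sets M \<and> prob_space \<mu>}"
    using distr_in_prob_spaces[OF g] by (rule funcsetI)
qed

theorem bij_betw_distr_Mp:
  assumes f: "continuous_map X Y f" and bij: "bij_betw f (topspace X) (topspace Y)"
    and K: "\<And>n::nat. compactin X (K n)" and X: "(\<Union>n. K n) = topspace X"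
    and Y: "Hausdorff_space Y"
  shows "f \<in> borel_of X \<rightarrow>\<^sub>M borel_of Y
    \<and> (\<forall>\<nu>\<in>Mp X. distr \<nu> (borel_of Y) f \<in> Mp Y)
    \<and> bij_betw (\<lambda>\<nu>. distr \<nu> (borel_of Y) f) (Mp X) (Mp Y)"
proof -
  have meas: "f \<in> borel_of X \<rightarrow>\<^sub>M borel_of Y"
    by (rule measurable_borel_of_continuous_map[OF f])
  have "bij_betw (\<lambda>\<nu>. distr \<nu> (borel_of Y) f) (Mp X) (Mp Y)"
    unfolding Mp_def
  proof (rule bij_betw_distr_prob_space[OF meas measurable_inv_into_borel_of[OF f bij K X Y]])
    show "inv_into (topspace X) f (f x) = x" if "x \<in> space (borel_of X)" for x
      using that bij_betw_imp_inj_on[OF bij] by simp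
    show "f (inv_into (topspace X) f y) = y" if "y \<in> space (borel_of Y)" for y
      using that bij_betw_imp_surj_on[OF bij] by (simp add: f_inv_into_f)
  qed
  then show ?thesis
    using meas bij_betw_imp_funcset by blast
qed

section \<open>The topology of compact convergence\<close>

lemma openin_compact_uniform_top_uc_nbhd:
  "compact K \<Longrightarrow> 0 < e \<Longrightarrow> openin compact_uniform_top (uc_nbhd f K e)"
  unfolding compact_uniform_top_def by (rule topology_generated_by_Basis) blast

lemma topspace_compact_uniform_top [simp]: "topspace compact_uniform_top = UNIV"
proof -
  have "uc_nbhd f {} 1 = UNIV" for f
    by (auto simp: uc_nbhd_def intro: exI[of _ 0])
  then show ?thesis
    using openin_compact_uniform_top_uc_nbhd[of "{}" 1] openin_subset by fastforce
qed

lemma topspace_LP_top [simp]: "topspace LP_top = LP"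
  by (simp add: LP_top_def)

lemma Hausdorff_space_compact_uniform_top: "Hausdorff_space compact_uniform_top"
  unfolding Hausdorff_space_def
proof (intro allI impI)
  fix f g :: "complex \<Rightarrow> complex"
  assume "f \<in> topspace compact_uniform_top \<and> g \<in> topspace compact_uniform_top \<and> f \<noteq> g"
  then obtain z where z: "f z \<noteq> g z"
    by (meson ext)
  define e where "e = cmod (f z - g z) / 2"
  have e: "0 < e"
    using z by (simp add: e_def)
  have "disjnt (uc_nbhd f {z} e) (uc_nbhd g {z} e)"
    unfolding disjnt_def
  proof (rule equals0I)
    fix h assume "h \<in> uc_nbhd f {z} e \<inter> uc_nbhd g {z} e"
    then have "cmod (h z - f z) < e" "cmod (h z - g z) < e"
      by (auto simp: uc_nbhd_def)
    moreover have "cmod (f z - g z) \<le> cmod (h z - f z) + cmod (h z - g z)"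
      using norm_triangle_ineq[of "f z - h z" "h z - g z"] by (simp add: norm_minus_commute)
    ultimately show False
      by (simp add: e_def)
  qed
  moreover have "f \<in> uc_nbhd f {z} e" "g \<in> uc_nbhd g {z} e"
    using e by (auto simp: uc_nbhd_def)
  ultimately show "\<exists>U V. openin compact_uniform_top U \<and> openin compact_uniform_top V
      \<and> f \<in> U \<and> g \<in> V \<and> disjnt U V"
    using openin_compact_uniform_top_uc_nbhd[OF compact_sing e] by blast
qed

lemma Hausdorff_space_LP_top: "Hausdorff_space LP_top"
  unfolding LP_top_def by (rule Hausdorff_space_subtopology[OF Hausdorff_space_compact_uniform_top])

lemma continuous_map_compact_uniform_topI:
  assumes "\<And>x0 K e. x0 \<in> topspace X \<Longrightarrow> compact K \<Longrightarrow> 0 < e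
      \<Longrightarrow> \<exists>W. openin X W \<and> x0 \<in> W \<and> (\<forall>x\<in>W. \<forall>z\<in>K. cmod (h x z - h x0 z) < e)"
  shows "continuous_map X compact_uniform_top h"
  unfolding compact_uniform_top_def continuous_on_generated_topo_iff
proof (intro conjI allI impI)
  show "h ` topspace X \<subseteq> \<Union> {uc_nbhd f K e |f K e. compact K \<and> 0 < e}"
    using topspace_compact_uniform_top unfolding compact_uniform_top_def by simp
  fix U assume "U \<in> {uc_nbhd f K e |f K e. compact K \<and> 0 < e}"
  then obtain f K e where U: "U = uc_nbhd f K e" and K: "compact K" and "0 < e"
    by blast
  show "openin X (h -` U \<inter> topspace X)"
  proof (subst openin_subopen, intro ballI)
    fix x0 assume "x0 \<in> h -` U \<inter> topspace X"
    then obtain d where x0: "x0 \<in> topspace X" and "d < e" and d: "\<And>z. z \<in> K \<Longrightarrow> cmod (h x0 z - f z) \<le> d"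
      by (auto simp: U uc_nbhd_def)
    then obtain W where W: "openin X W" "x0 \<in> W"
      and near: "\<And>x z. x \<in> W \<Longrightarrow> z \<in> K \<Longrightarrow> cmod (h x z - h x0 z) < (e - d) / 2"
      using assms[OF x0 K, of "(e - d) / 2"] by auto
    have "h x \<in> U" if "x \<in> W" for x
    proof -
      have "cmod (h x z - f z) \<le> d + (e - d) / 2" if "z \<in> K" for z
      proof -
        have "cmod (h x z - f z) \<le> cmod (h x z - h x0 z) + cmod (h x0 z - f z)"
          using norm_triangle_ineq[of "h x z - h x0 z" "h x0 z - f z"] by simp
        then show ?thesis
          using near[OF \<open>x \<in> W\<close> that] d[OF that] by linarith
      qed
      moreover have "d + (e - d) / 2 < e"
        using \<open>d < e\<close> by (simp add: field_simps)
      ultimately show ?thesis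
        unfolding U uc_nbhd_def by blast
    qed
    then show "\<exists>T. openin X T \<and> x0 \<in> T \<and> T \<subseteq> h -` U \<inter> topspace X"
      using W openin_subset by blast
  qed
qed

section \<open>\<open>\<Omega>\<close> is \<sigma>-compact\<close>

definition antimono_l2_ball :: "real \<Rightarrow> (nat \<Rightarrow> real) set" where
  "antimono_l2_ball D = {a. antimono a \<and> (\<forall>i. 0 \<le> a i) \<and> (\<forall>N. (\<Sum>i<N. (a i)\<^sup>2) \<le> D)}"

lemma antimono_l2_ball_mono: "D \<le> D' \<Longrightarrow> antimono_l2_ball D \<subseteq> antimono_l2_ball D'"
  unfolding antimono_l2_ball_def by (auto elim!: order_trans)

lemma antimono_l2_ball_imp_nonneg: "a \<in> antimono_l2_ball D \<Longrightarrow> 0 \<le> D"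
  unfolding antimono_l2_ball_def by (metis (no_types, lifting) lessThan_0 mem_Collect_eq sum.empty)

lemma antimono_l2_ball_sq_le:
  assumes "a \<in> antimono_l2_ball D"
  shows "(a k)\<^sup>2 \<le> D / real (Suc k)"
proof -
  have "a k \<le> a i" "0 \<le> a k" if "i \<le> k" for i
    using assms that by (auto simp: antimono_l2_ball_def antimono_def)
  then have "(\<Sum>i<Suc k. (a k)\<^sup>2) \<le> (\<Sum>i<Suc k. (a i)\<^sup>2)"
    by (intro sum_mono power_mono) auto
  also have "\<dots> \<le> D"
    using assms unfolding antimono_l2_ball_def by blast
  finally show ?thesis
    by (simp add: field_simps del: of_nat_Suc)
qed

lemma antimono_l2_ball_suminf:
  assumes "antimono a" "\<And>i. 0 \<le> a i" "summable (\<lambda>i. (a i)\<^sup>2)"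
  shows "a \<in> antimono_l2_ball (\<Sum>i. (a i)\<^sup>2)"
  unfolding antimono_l2_ball_def using assms by (auto intro!: sum_le_suminf)

lemma antimono_l2_ball_summable: "a \<in> antimono_l2_ball D \<Longrightarrow> summable (\<lambda>k. (a k)\<^sup>2)"
  unfolding antimono_l2_ball_def by (blast intro: summableI_nonneg_bounded zero_le_power2)

lemma closed_antimono_l2_ball: "closed (antimono_l2_ball D)"
proof -
  have "continuous_on UNIV (\<lambda>a::nat\<Rightarrow>real. \<Sum>i<N. (a i)\<^sup>2)" for N
    by (intro continuous_intros continuous_on_product_coordinates)
  then show ?thesis
    unfolding antimono_l2_ball_def decseq_Suc_iff
    by (intro closed_Collect_conj closed_Collect_all closed_Collect_le
        continuous_on_product_coordinates continuous_on_const)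
qed

lemma antimono_l2_ball_le_sqrt:
  assumes "a \<in> antimono_l2_ball D"
  shows "a k \<le> sqrt D"
proof -
  have "a k \<le> a 0"
    using assms by (simp add: antimono_l2_ball_def antimono_def)
  also have "a 0 \<le> sqrt D"
    using antimono_l2_ball_sq_le[OF assms, of 0] by (simp add: real_le_rsqrt)
  finally show ?thesis .
qed

lemma compact_antimono_l2_ball: "compact (antimono_l2_ball D)"
proof -
  have "compact (PiE UNIV (\<lambda>_::nat. {0..sqrt D}))"
    using compactin_PiE[of "\<lambda>_. euclidean" UNIV "\<lambda>_. {0..sqrt D}"]
    by (simp add: euclidean_product_topology)
  moreover have "antimono_l2_ball D \<subseteq> PiE UNIV (\<lambda>_::nat. {0..sqrt D})"
    using antimono_l2_ball_le_sqrt by (auto simp: antimono_l2_ball_def)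
  ultimately show ?thesis
    using compact_Int_closed[OF _ closed_antimono_l2_ball] by (metis inf.absorb2)
qed

lemma compactin_pullback_topology:
  assumes "S \<subseteq> A" and "compact (f ` S)"
  shows "compactin (pullback_topology A f euclidean) S"
  unfolding compactin_def
proof (intro conjI allI impI)
  show "S \<subseteq> topspace (pullback_topology A f euclidean)"
    using assms(1) by (simp add: topspace_pullback_topology)
  fix \<U> assume \<U>: "(\<forall>W\<in>\<U>. openin (pullback_topology A f euclidean) W) \<and> S \<subseteq> \<Union>\<U>"
  then obtain V where V: "\<And>W. W \<in> \<U> \<Longrightarrow> open (V W) \<and> W = f -` V W \<inter> A"
    unfolding openin_pullback_topology by (metis open_openin)
  have "f ` S \<subseteq> (\<Union>W\<in>\<U>. V W)"
    using \<U> V by blast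
  then obtain \<F> where \<F>: "\<F> \<subseteq> \<U>" "finite \<F>" "f ` S \<subseteq> (\<Union>W\<in>\<F>. V W)"
    using compactE_image[OF assms(2), of \<U> V] V by blast
  then have "S \<subseteq> \<Union>\<F>"
    using V assms(1) by blast
  with \<F> show "\<exists>\<F>. finite \<F> \<and> \<F> \<subseteq> \<U> \<and> S \<subseteq> \<Union>\<F>"
    by blast
qed

lemma topspace_Omega_top [simp]: "topspace Omega_top = Omega"
  by (simp add: Omega_top_def topspace_pullback_topology)

lemma delta_eq [simp]: "delta (a, b, g1, g2) = g2 + (\<Sum>i. (a i)\<^sup>2) + (\<Sum>i. (b i)\<^sup>2)"
  by (simp add: delta_def)

lemma Omega_coords_eq [simp]: "Omega_coords (a, b, g1, g2) = (a, b, g1, delta (a, b, g1, g2))"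
  by (simp add: Omega_coords_def)

lemma mem_Omega:
  "(a, b, g1, g2) \<in> Omega \<longleftrightarrow> antimono a \<and> (\<forall>i. 0 \<le> a i) \<and> antimono b \<and> (\<forall>i. 0 \<le> b i)
     \<and> summable (\<lambda>i. (a i)\<^sup>2) \<and> summable (\<lambda>i. (b i)\<^sup>2) \<and> 0 \<le> g2"
  by (simp add: Omega_def)

lemma Omega_imp_antimono_l2_ball:
  assumes "(a, b, g1, g2) \<in> Omega"
  shows "a \<in> antimono_l2_ball (delta (a, b, g1, g2))" "b \<in> antimono_l2_ball (delta (a, b, g1, g2))"
    and "0 \<le> delta (a, b, g1, g2)"
proof -
  have a: "a \<in> antimono_l2_ball (\<Sum>i. (a i)\<^sup>2)" and b: "b \<in> antimono_l2_ball (\<Sum>i. (b i)\<^sup>2)"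
    using assms by (simp_all add: mem_Omega antimono_l2_ball_suminf)
  have "0 \<le> g2" "0 \<le> (\<Sum>i. (a i)\<^sup>2)" "0 \<le> (\<Sum>i. (b i)\<^sup>2)"
    using assms by (simp_all add: mem_Omega suminf_nonneg)
  then have "(\<Sum>i. (a i)\<^sup>2) \<le> delta (a, b, g1, g2)" "(\<Sum>i. (b i)\<^sup>2) \<le> delta (a, b, g1, g2)"
    and "0 \<le> delta (a, b, g1, g2)"
    by simp_all
  then show "a \<in> antimono_l2_ball (delta (a, b, g1, g2))" "b \<in> antimono_l2_ball (delta (a, b, g1, g2))"
    and "0 \<le> delta (a, b, g1, g2)"
    using antimono_l2_ball_mono a b by blast+
qed

lemma Omega_coords_image:
  "Omega_coords ` Omega = {(a, b, g, d). antimono a \<and> (\<forall>i. 0 \<le> a i) \<and> antimono b \<and> (\<forall>i. 0 \<le> b i)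
     \<and> (\<forall>N. (\<Sum>i<N. (a i)\<^sup>2) + (\<Sum>i<N. (b i)\<^sup>2) \<le> d)}"
    (is "_ = ?Z")
proof (intro set_eqI iffI)
  fix p assume "p \<in> Omega_coords ` Omega"
  then obtain a b g1 g2 where \<omega>: "(a, b, g1, g2) \<in> Omega" and p: "p = Omega_coords (a, b, g1, g2)"
    by (metis imageE prod_cases4)
  have "(\<Sum>i<N. (a i)\<^sup>2) \<le> (\<Sum>i. (a i)\<^sup>2)" "(\<Sum>i<N. (b i)\<^sup>2) \<le> (\<Sum>i. (b i)\<^sup>2)" for N
    using \<omega> by (simp_all add: mem_Omega sum_le_suminf)
  then have "(\<Sum>i<N. (a i)\<^sup>2) + (\<Sum>i<N. (b i)\<^sup>2) \<le> delta (a, b, g1, g2)" for N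
    using \<omega> by (simp add: mem_Omega add_mono add_increasing)
  with \<omega> show "p \<in> ?Z"
    by (simp add: p mem_Omega)
next
  fix p assume "p \<in> ?Z"
  then obtain a b g d where p: "p = (a, b, g, d)" and a: "antimono a" "\<forall>i. 0 \<le> a i"
    and b: "antimono b" "\<forall>i. 0 \<le> b i" and le: "\<And>N. (\<Sum>i<N. (a i)\<^sup>2) + (\<Sum>i<N. (b i)\<^sup>2) \<le> d"
    by auto
  have "(\<Sum>i<N. (a i)\<^sup>2) \<le> d" "(\<Sum>i<N. (b i)\<^sup>2) \<le> d" for N
    using le[of N] a b by (smt (verit) sum_nonneg zero_le_power2)+
  then have sa: "summable (\<lambda>i. (a i)\<^sup>2)" and sb: "summable (\<lambda>i. (b i)\<^sup>2)"
    by (meson summableI_nonneg_bounded zero_le_power2)+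
  have "(\<Sum>i. (a i)\<^sup>2 + (b i)\<^sup>2) \<le> d"
    using le by (intro suminf_le_const summable_add sa sb) (simp add: sum.distrib)
  then have "(\<Sum>i. (a i)\<^sup>2) + (\<Sum>i. (b i)\<^sup>2) \<le> d"
    using suminf_add[OF sa sb] by simp
  then have "(a, b, g, d - (\<Sum>i. (a i)\<^sup>2) - (\<Sum>i. (b i)\<^sup>2)) \<in> Omega"
    using a b sa sb by (simp add: mem_Omega)
  moreover have "p = Omega_coords (a, b, g, d - (\<Sum>i. (a i)\<^sup>2) - (\<Sum>i. (b i)\<^sup>2))"
    by (simp add: p)
  ultimately show "p \<in> Omega_coords ` Omega"
    by blast
qed

lemma closed_Omega_coords_image: "closed (Omega_coords ` Omega)"
proof -
  have fst_coord: "continuous_on UNIV (\<lambda>p::omega. fst p i)" for i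
    by (rule continuous_on_product_then_coordinatewise) (intro continuous_intros)
  have snd_coord: "continuous_on UNIV (\<lambda>p::omega. fst (snd p) i)" for i
    by (rule continuous_on_product_then_coordinatewise) (intro continuous_intros)
  have sums: "continuous_on UNIV (\<lambda>p::omega. (\<Sum>i<N. (fst p i)\<^sup>2) + (\<Sum>i<N. (fst (snd p) i)\<^sup>2))" for N
    by (intro continuous_intros fst_coord snd_coord)
  have last_coord: "continuous_on UNIV (\<lambda>p::omega. snd (snd (snd p)))"
    by (intro continuous_intros)
  have "Omega_coords ` Omega = {p. (\<forall>i. fst p (Suc i) \<le> fst p i) \<and> (\<forall>i. 0 \<le> fst p i)
      \<and> (\<forall>i. fst (snd p) (Suc i) \<le> fst (snd p) i) \<and> (\<forall>i. 0 \<le> fst (snd p) i)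
      \<and> (\<forall>N. (\<Sum>i<N. (fst p i)\<^sup>2) + (\<Sum>i<N. (fst (snd p) i)\<^sup>2) \<le> snd (snd (snd p)))}"
    unfolding Omega_coords_image by (auto simp: decseq_Suc_iff)
  also have "closed \<dots>"
    by (intro closed_Collect_conj closed_Collect_all closed_Collect_le fst_coord snd_coord sums
        last_coord continuous_on_const)
  finally show ?thesis .
qed

definition Omega_bounded :: "nat \<Rightarrow> omega set" where
  "Omega_bounded n = Omega \<inter> Omega_coords -` (antimono_l2_ball n \<times> antimono_l2_ball n \<times> cball 0 n \<times> cball 0 n)"

lemma compactin_Omega_bounded: "compactin Omega_top (Omega_bounded n)"
  unfolding Omega_top_def
proof (rule compactin_pullback_topology)
  show "Omega_bounded n \<subseteq> Omega"
    by (auto simp: Omega_bounded_def)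
  have "Omega_coords ` Omega_bounded n
      = Omega_coords ` Omega \<inter> (antimono_l2_ball n \<times> antimono_l2_ball n \<times> cball 0 n \<times> cball 0 n)"
    by (auto simp: Omega_bounded_def)
  then show "compact (Omega_coords ` Omega_bounded n)"
    by (simp add: closed_Int_compact closed_Omega_coords_image compact_Times compact_antimono_l2_ball)
qed

lemma Union_Omega_bounded: "(\<Union>n. Omega_bounded n) = topspace Omega_top"
proof (intro set_eqI iffI)
  fix \<omega> assume "\<omega> \<in> topspace Omega_top"
  moreover obtain a b g1 g2 where \<omega>: "\<omega> = (a, b, g1, g2)"
    by (cases \<omega>)
  ultimately have \<Omega>: "(a, b, g1, g2) \<in> Omega"
    by simp
  obtain n where n: "max \<bar>g1\<bar> (delta \<omega>) \<le> real n"
    using real_arch_simple by blast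
  then have "a \<in> antimono_l2_ball n" "b \<in> antimono_l2_ball n"
    using Omega_imp_antimono_l2_ball[OF \<Omega>] antimono_l2_ball_mono[of "delta \<omega>" n] by (auto simp: \<omega>)
  with n \<Omega> have "\<omega> \<in> Omega_bounded n"
    using Omega_imp_antimono_l2_ball(3)[OF \<Omega>] by (simp add: Omega_bounded_def \<omega>)
  then show "\<omega> \<in> (\<Union>n. Omega_bounded n)"
    by blast
qed (auto simp: Omega_bounded_def)

section \<open>Genus-two canonical products\<close>

lemma weierstrass_factor_1_eq: "weierstrass_factor 1 w = exp w * (1 - w)"
  by (simp add: weierstrass_factor_def)

lemma weierstrass_factor_2_eq: "weierstrass_factor 2 w = exp (w + w\<^sup>2 / 2) * (1 - w)"
  by (simp add: weierstrass_factor_def numeral_2_eq_2)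

lemma weierstrass_factor_1_eq_2: "weierstrass_factor 1 w = weierstrass_factor 2 w * exp (- (w\<^sup>2 / 2))"
proof -
  have "weierstrass_factor 2 w * exp (- (w\<^sup>2 / 2)) = (exp (w + w\<^sup>2 / 2) * exp (- (w\<^sup>2 / 2))) * (1 - w)"
    by (simp add: weierstrass_factor_2_eq mult_ac)
  also have "\<dots> = weierstrass_factor 1 w"
    unfolding weierstrass_factor_1_eq by (simp flip: exp_add)
  finally show ?thesis ..
qed

definition canonical_product :: "(nat \<Rightarrow> real) \<Rightarrow> complex \<Rightarrow> complex" where
  "canonical_product a z = (\<Prod>k. weierstrass_factor 2 (z * of_real (a k)))"

lemma summable_powr_three_halves:
  assumes "0 \<le> D"
  shows "summable (\<lambda>k. (D / real (Suc k)) powr (3 / 2))"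
proof -
  have "summable (\<lambda>k. D powr (3 / 2) * real (Suc k) powr (- 3 / 2))"
    using summable_real_powr_iff[of "- 3 / 2"] summable_Suc_iff[of "\<lambda>k. real k powr (- 3 / 2)"]
    by (intro summable_mult) simp
  moreover have "(D / real (Suc k)) powr (3 / 2) = D powr (3 / 2) * real (Suc k) powr (- 3 / 2)" for k
    using assms by (simp add: powr_divide powr_minus_divide)
  ultimately show ?thesis
    by simp
qed

lemma antimono_l2_ball_cube_le:
  assumes "a \<in> antimono_l2_ball D"
  shows "a k ^ 3 \<le> (D / real (Suc k)) powr (3 / 2)"
proof -
  have "0 \<le> D / real (Suc k)"
    using antimono_l2_ball_imp_nonneg[OF assms] by simp
  then have "a k \<le> (D / real (Suc k)) powr (1 / 2)"
    using real_le_rsqrt[OF antimono_l2_ball_sq_le[OF assms]] by (simp add: powr_half_sqrt)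
  then have "a k ^ 3 \<le> ((D / real (Suc k)) powr (1 / 2)) ^ 3"
    using assms by (intro power_mono) (simp_all add: antimono_l2_ball_def)
  also have "\<dots> = (D / real (Suc k)) powr (1 / 2 + 1 / 2 + 1 / 2)"
    by (simp only: power3_eq_cube powr_add)
  finally show ?thesis
    by simp
qed

lemma norm_weierstrass_factor_2_le:
  assumes a: "a \<in> antimono_l2_ball D" and z: "norm z \<le> R" and small: "R * sqrt (D / real (Suc k)) \<le> 1 / 2"
  shows "norm (weierstrass_factor 2 (z * of_real (a k)) - 1) \<le> 3 * R ^ 3 * (D / real (Suc k)) powr (3 / 2)"
proof -
  have a0: "0 \<le> a k"
    using a by (simp add: antimono_l2_ball_def)
  have R0: "0 \<le> R"
    using z norm_ge_zero[of z] by linarith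
  have "a k \<le> sqrt (D / real (Suc k))"
    using antimono_l2_ball_sq_le[OF a] by (rule real_le_rsqrt)
  then have "norm z * a k \<le> R * sqrt (D / real (Suc k))"
    using z a0 R0 by (intro mult_mono) auto
  with small have "norm (z * of_real (a k)) \<le> 1 / 2"
    using a0 by (simp add: norm_mult)
  then have "norm (weierstrass_factor 2 (z * of_real (a k)) - 1) \<le> 3 * (norm z ^ 3 * a k ^ 3)"
    using weierstrass_factor_bound[of "z * of_real (a k)" 2] a0 by (simp add: norm_mult power_mult_distrib)
  also have "\<dots> \<le> 3 * (R ^ 3 * (D / real (Suc k)) powr (3 / 2))"
    using antimono_l2_ball_cube_le[OF a, of k] a0 R0 z by (intro mult_left_mono mult_mono power_mono) auto
  finally show ?thesis
    by (simp add: mult_ac)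
qed

lemma eventually_norm_weierstrass_factor_2_le:
  "\<forall>\<^sub>F k in sequentially. \<forall>x \<in> antimono_l2_ball D \<times> cball (0::complex) R.
     norm (weierstrass_factor 2 (snd x * of_real (fst x k)) - 1) \<le> 3 * R ^ 3 * (D / real (Suc k)) powr (3 / 2)"
proof -
  have "(\<lambda>k. R * sqrt (D * inverse (real (Suc k)))) \<longlonglongrightarrow> R * sqrt (D * 0)"
    by (intro tendsto_intros LIMSEQ_inverse_real_of_nat)
  then have "(\<lambda>k. R * sqrt (D / real (Suc k))) \<longlonglongrightarrow> 0"
    by (simp add: divide_inverse)
  then have "\<forall>\<^sub>F k in sequentially. R * sqrt (D / real (Suc k)) < 1 / 2"
    by (rule order_tendstoD(2)) simp
  then show ?thesis
  proof eventually_elim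
    case (elim k)
    show ?case
    proof
      fix x :: "(nat \<Rightarrow> real) \<times> complex"
      assume "x \<in> antimono_l2_ball D \<times> cball 0 R"
      with elim show "norm (weierstrass_factor 2 (snd x * of_real (fst x k)) - 1)
          \<le> 3 * R ^ 3 * (D / real (Suc k)) powr (3 / 2)"
        by (intro norm_weierstrass_factor_2_le) (auto simp: mem_Times_iff)
    qed
  qed
qed

lemma convergent_prod_canonical_product:
  assumes a: "a \<in> antimono_l2_ball D"
  shows "convergent_prod (\<lambda>k. weierstrass_factor 2 (z * of_real (a k)))"
proof -
  have "summable (\<lambda>k. norm (weierstrass_factor 2 (z * of_real (a k)) - 1))"
  proof (rule summable_comparison_test_ev)
    have "(a, z) \<in> antimono_l2_ball D \<times> cball 0 (norm z)"
      using a by simp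
    with eventually_norm_weierstrass_factor_2_le[of D "norm z"]
    show "\<forall>\<^sub>F k in sequentially. norm (norm (weierstrass_factor 2 (z * of_real (a k)) - 1))
        \<le> 3 * norm z ^ 3 * (D / real (Suc k)) powr (3 / 2)"
      by (auto elim!: eventually_mono)
    show "summable (\<lambda>k. 3 * norm z ^ 3 * (D / real (Suc k)) powr (3 / 2))"
      using summable_powr_three_halves[OF antimono_l2_ball_imp_nonneg[OF a]] by (rule summable_mult)
  qed
  then show ?thesis
    by (intro abs_convergent_prod_imp_convergent_prod) (simp add: abs_convergent_prod_conv_summable)
qed

lemma continuous_on_weierstrass_factor_2_coord:
  "continuous_on S (\<lambda>x::(nat \<Rightarrow> real) \<times> complex. weierstrass_factor 2 (snd x * of_real (fst x k)))"
proof -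
  have "continuous_on S (\<lambda>x::(nat \<Rightarrow> real) \<times> complex. fst x k)"
    by (rule continuous_on_product_then_coordinatewise) (intro continuous_intros)
  then show ?thesis
    by (intro continuous_intros)
qed

lemma uniform_limit_canonical_product:
  assumes "0 \<le> D"
  shows "uniform_limit (antimono_l2_ball D \<times> cball 0 R)
    (\<lambda>N x. \<Prod>k<N. weierstrass_factor 2 (snd x * of_real (fst x k)))
    (\<lambda>x. canonical_product (fst x) (snd x)) sequentially"
proof -
  let ?S = "antimono_l2_ball D \<times> cball (0::complex) R"
  let ?P = "\<lambda>N x. \<Prod>k<N. weierstrass_factor 2 (snd x * of_real (fst x k))"
  have "uniformly_convergent_on ?S ?P"
  proof (rule uniformly_convergent_on_prod'[OF continuous_on_weierstrass_factor_2_coord])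
    show "compact ?S"
      by (intro compact_Times compact_antimono_l2_ball compact_cball)
    show "uniformly_convergent_on ?S (\<lambda>N x. \<Sum>k<N. norm (weierstrass_factor 2 (snd x * of_real (fst x k)) - 1))"
      using eventually_norm_weierstrass_factor_2_le[of D R]
      by (intro Weierstrass_m_test'_ev[OF _ summable_mult[OF summable_powr_three_halves[OF assms]]]) simp
  qed
  then obtain Q where Q: "uniform_limit ?S ?P Q sequentially"
    by (auto simp: uniformly_convergent_on_def)
  moreover have Q_eq: "Q x = canonical_product (fst x) (snd x)" if "x \<in> ?S" for x
  proof (rule tendsto_unique)
    show "(\<lambda>N. ?P N x) \<longlonglongrightarrow> Q x"
      using Q that by (rule tendsto_uniform_limitI)
    have "convergent_prod (\<lambda>k. weierstrass_factor 2 (snd x * of_real (fst x k)))"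
      using that by (intro convergent_prod_canonical_product[of _ D]) (simp add: mem_Times_iff)
    then show "(\<lambda>N. ?P N x) \<longlonglongrightarrow> canonical_product (fst x) (snd x)"
      unfolding canonical_product_def LIMSEQ_lessThan_iff_atMost by (rule convergent_prod_LIMSEQ)
  qed simp
  ultimately show ?thesis
    using uniform_limit_cong'[of ?S ?P ?P Q "\<lambda>x. canonical_product (fst x) (snd x)"] by blast
qed

lemma continuous_on_canonical_product_cball:
  "continuous_on (antimono_l2_ball D \<times> cball 0 R) (\<lambda>x. canonical_product (fst x) (snd x))"
proof (cases "0 \<le> D")
  case True
  show ?thesis
  proof (rule uniform_limit_theorem[OF _ uniform_limit_canonical_product[OF True]])
    show "\<forall>\<^sub>F N in sequentially. continuous_on (antimono_l2_ball D \<times> cball 0 R)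
        (\<lambda>x. \<Prod>k<N. weierstrass_factor 2 (snd x * of_real (fst x k)))"
      by (intro always_eventually allI continuous_on_prod continuous_on_weierstrass_factor_2_coord)
  qed simp
next
  case False
  then have "antimono_l2_ball D = {}"
    using antimono_l2_ball_imp_nonneg by blast
  then show ?thesis
    by simp
qed

lemma continuous_on_Times_UNIV:
  fixes f :: "'a::t2_space \<times> 'b::real_normed_vector \<Rightarrow> 'c::topological_space"
  assumes "\<And>R. continuous_on (S \<times> cball 0 R) f"
  shows "continuous_on (S \<times> UNIV) f"
  unfolding continuous_on_eq_continuous_within
proof (intro ballI)
  fix x :: "'a \<times> 'b" assume "x \<in> S \<times> UNIV"
  then obtain s y where x: "x = (s, y)" "s \<in> S"
    by blast
  define R where "R = norm y + 1"
  have "continuous (at x within S \<times> cball 0 R) f"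
    using assms[of R] x by (auto simp: continuous_on_eq_continuous_within R_def mem_Times_iff)
  moreover have "at x within S \<times> UNIV = at x within S \<times> cball 0 R"
    by (rule at_within_nhd[where S = "UNIV \<times> ball 0 R"]) (auto simp: R_def x open_Times mem_Times_iff)
  ultimately show "continuous (at x within S \<times> UNIV) f"
    by simp
qed

lemma continuous_on_canonical_product:
  "continuous_on (antimono_l2_ball D \<times> UNIV) (\<lambda>x. canonical_product (fst x) (snd x))"
  by (rule continuous_on_Times_UNIV) (rule continuous_on_canonical_product_cball)

lemma convergent_prod_weierstrass_factor_1:
  assumes a: "a \<in> antimono_l2_ball D"
  shows "convergent_prod (\<lambda>k. weierstrass_factor 1 (z * of_real (a k)))"
proof -
  have "summable (\<lambda>k. - (z\<^sup>2 / 2) * of_real ((a k)\<^sup>2))"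
    using antimono_l2_ball_summable[OF a] by (intro summable_mult) (simp only: summable_complex_of_real)
  then have "convergent_prod (\<lambda>k. weierstrass_factor 2 (z * of_real (a k)) * exp (- (z\<^sup>2 / 2) * of_real ((a k)\<^sup>2)))"
    by (intro convergent_prod_mult convergent_prod_canonical_product[OF a] convergent_prod_exp)
  then show ?thesis
    unfolding weierstrass_factor_1_eq_2 by (simp add: power_mult_distrib)
qed

lemma prodinf_weierstrass_factor_1:
  assumes a: "a \<in> antimono_l2_ball D"
  shows "(\<Prod>k. weierstrass_factor 1 (z * of_real (a k)))
    = canonical_product a z * exp (- (z\<^sup>2 / 2) * of_real (\<Sum>k. (a k)\<^sup>2))"
proof -
  have sq: "summable (\<lambda>k. (a k)\<^sup>2)"
    by (rule antimono_l2_ball_summable[OF a])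
  then have sq': "summable (\<lambda>k. - (z\<^sup>2 / 2) * of_real ((a k)\<^sup>2))"
    by (intro summable_mult) (simp only: summable_complex_of_real)
  have "(\<Prod>k. weierstrass_factor 1 (z * of_real (a k)))
      = (\<Prod>k. weierstrass_factor 2 (z * of_real (a k)) * exp (- (z\<^sup>2 / 2) * of_real ((a k)\<^sup>2)))"
    unfolding weierstrass_factor_1_eq_2 by (simp add: power_mult_distrib)
  also have "\<dots> = canonical_product a z * (\<Prod>k. exp (- (z\<^sup>2 / 2) * of_real ((a k)\<^sup>2)))"
    unfolding canonical_product_def
    by (rule prodinf_mult[symmetric, OF convergent_prod_canonical_product[OF a] convergent_prod_exp[OF sq']])
  also have "(\<Prod>k. exp (- (z\<^sup>2 / 2) * of_real ((a k)\<^sup>2))) = exp (\<Sum>k. - (z\<^sup>2 / 2) * of_real ((a k)\<^sup>2))"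
    by (rule prodinf_exp[OF sq'])
  also have "(\<Sum>k. - (z\<^sup>2 / 2) * of_real ((a k)\<^sup>2)) = - (z\<^sup>2 / 2) * (\<Sum>k. of_real ((a k)\<^sup>2))"
    using sq by (intro suminf_mult) (simp only: summable_complex_of_real)
  also have "(\<Sum>k. complex_of_real ((a k)\<^sup>2)) = of_real (\<Sum>k. (a k)\<^sup>2)"
    using sq by (rule suminf_of_real[symmetric])
  finally show ?thesis .
qed

section \<open>Continuity of \<open>E\<close>\<close>

lemma E_eq_weierstrass_factor:
  "E (a, b, g1, g2) z = exp (- of_real g1 * z - of_real g2 / 2 * z\<^sup>2)
     * (\<Prod>k. weierstrass_factor 1 (z * of_real (a k))) * (\<Prod>k. weierstrass_factor 1 (- z * of_real (b k)))"
  unfolding E_def weierstrass_factor_1_eq by simp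

definition E_coords :: "(nat \<Rightarrow> real) \<times> (nat \<Rightarrow> real) \<times> real \<times> real \<Rightarrow> complex \<Rightarrow> complex" where
  "E_coords = (\<lambda>(a, b, g, d) z.
     exp (- of_real g * z - of_real d / 2 * z\<^sup>2) * canonical_product a z * canonical_product b (- z))"

lemma E_eq_E_coords:
  assumes \<omega>: "\<omega> \<in> Omega"
  shows "E \<omega> z = E_coords (Omega_coords \<omega>) z"
proof -
  obtain a b g1 g2 where \<omega>_eq: "\<omega> = (a, b, g1, g2)"
    by (cases \<omega>)
  define Sa where "Sa = (\<Sum>k. (a k)\<^sup>2)"
  define Sb where "Sb = (\<Sum>k. (b k)\<^sup>2)"
  have a: "a \<in> antimono_l2_ball (delta \<omega>)" and b: "b \<in> antimono_l2_ball (delta \<omega>)"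
    using Omega_imp_antimono_l2_ball \<omega> by (simp_all add: \<omega>_eq)
  have "E \<omega> z = exp (- of_real g1 * z - of_real g2 / 2 * z\<^sup>2)
      * (canonical_product a z * exp (- (z\<^sup>2 / 2) * of_real Sa))
      * (canonical_product b (- z) * exp (- ((- z)\<^sup>2 / 2) * of_real Sb))"
    unfolding \<omega>_eq E_eq_weierstrass_factor Sa_def Sb_def
    by (simp only: prodinf_weierstrass_factor_1[OF a] prodinf_weierstrass_factor_1[OF b])
  also have "\<dots> = (exp (- of_real g1 * z - of_real g2 / 2 * z\<^sup>2) * exp (- (z\<^sup>2 / 2) * of_real Sa)
      * exp (- ((- z)\<^sup>2 / 2) * of_real Sb)) * canonical_product a z * canonical_product b (- z)"
    by (simp only: mult_ac)
  also have "exp (- of_real g1 * z - of_real g2 / 2 * z\<^sup>2) * exp (- (z\<^sup>2 / 2) * of_real Sa)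
      * exp (- ((- z)\<^sup>2 / 2) * of_real Sb) = exp (- of_real g1 * z - of_real (g2 + Sa + Sb) / 2 * z\<^sup>2)"
    unfolding exp_add[symmetric] by (rule arg_cong[where f = exp]) (simp add: algebra_simps add_divide_distrib)
  finally show ?thesis
    by (simp add: E_coords_def \<omega>_eq Sa_def Sb_def)
qed

lemma continuous_on_E_coords:
  "continuous_on ((antimono_l2_ball D \<times> antimono_l2_ball D \<times> UNIV) \<times> UNIV) (\<lambda>y. E_coords (fst y) (snd y))"
proof -
  let ?T = "(antimono_l2_ball D \<times> antimono_l2_ball D \<times> (UNIV :: (real \<times> real) set)) \<times> (UNIV :: complex set)"
  have "continuous_on ?T (\<lambda>y. canonical_product (fst (fst y)) (snd y))"
    by (rule continuous_on_compose2[OF continuous_on_canonical_product, of _ "\<lambda>y. (fst (fst y), snd y)", simplified])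
      (auto intro!: continuous_on_Pair continuous_on_fst continuous_on_snd continuous_on_id simp: mem_Times_iff)
  moreover have "continuous_on ?T (\<lambda>y. canonical_product (fst (snd (fst y))) (- snd y))"
    by (rule continuous_on_compose2[OF continuous_on_canonical_product, of _ "\<lambda>y. (fst (snd (fst y)), - snd y)", simplified])
      (auto intro!: continuous_on_Pair continuous_on_fst continuous_on_snd continuous_on_minus continuous_on_id
        simp: mem_Times_iff)
  ultimately show ?thesis
    unfolding E_coords_def case_prod_unfold by (intro continuous_intros) simp_all
qed

lemma compact_Times_uniform_in_parameter:
  fixes F :: "'a::metric_space \<Rightarrow> 'b::metric_space \<Rightarrow> 'c::metric_space"
  assumes "compact C" "compact K" "continuous_on (C \<times> K) (\<lambda>y. F (fst y) (snd y))" "0 < e"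
  shows "\<exists>\<eta>>0. \<forall>p\<in>C. \<forall>p0\<in>C. dist p p0 < \<eta> \<longrightarrow> (\<forall>z\<in>K. dist (F p z) (F p0 z) < e)"
proof -
  have "uniformly_continuous_on (C \<times> K) (\<lambda>y. F (fst y) (snd y))"
    using assms by (intro compact_uniformly_continuous compact_Times)
  then obtain \<eta> where "0 < \<eta>" and \<eta>: "\<And>y y'. y \<in> C \<times> K \<Longrightarrow> y' \<in> C \<times> K \<Longrightarrow> dist y' y < \<eta>
      \<Longrightarrow> dist (F (fst y') (snd y')) (F (fst y) (snd y)) < e"
    using \<open>0 < e\<close> unfolding uniformly_continuous_on_def by metis
  have "dist (F p z) (F p0 z) < e" if "p \<in> C" "p0 \<in> C" "dist p p0 < \<eta>" "z \<in> K" for p p0 z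
    using \<eta>[of "(p0, z)" "(p, z)"] that by (simp add: dist_Pair_Pair)
  with \<open>0 < \<eta>\<close> show ?thesis
    by blast
qed

lemma Omega_coords_in_compact_nbhd:
  assumes \<omega>: "\<omega> \<in> Omega" and \<omega>0: "\<omega>0 \<in> Omega" and near: "dist (Omega_coords \<omega>) (Omega_coords \<omega>0) < 1"
  shows "Omega_coords \<omega> \<in> antimono_l2_ball (delta \<omega>0 + 1) \<times> antimono_l2_ball (delta \<omega>0 + 1)
    \<times> cball (snd (snd (Omega_coords \<omega>0))) 1"
proof -
  obtain a b g1 g2 where \<omega>_eq: "\<omega> = (a, b, g1, g2)"
    by (cases \<omega>)
  have last2: "dist (snd (snd (Omega_coords \<omega>))) (snd (snd (Omega_coords \<omega>0))) < 1"
    using near dist_snd_le[of "Omega_coords \<omega>" "Omega_coords \<omega>0"]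
      dist_snd_le[of "snd (Omega_coords \<omega>)" "snd (Omega_coords \<omega>0)"] by linarith
  moreover have "dist (delta \<omega>) (delta \<omega>0) \<le> dist (snd (snd (Omega_coords \<omega>))) (snd (snd (Omega_coords \<omega>0)))"
    using dist_snd_le[of "snd (snd (Omega_coords \<omega>))" "snd (snd (Omega_coords \<omega>0))"]
    by (cases \<omega>0) (simp add: \<omega>_eq)
  ultimately have "delta \<omega> \<le> delta \<omega>0 + 1"
    by (simp add: dist_real_def)
  then have "antimono_l2_ball (delta \<omega>) \<subseteq> antimono_l2_ball (delta \<omega>0 + 1)"
    by (rule antimono_l2_ball_mono)
  then have "a \<in> antimono_l2_ball (delta \<omega>0 + 1)" "b \<in> antimono_l2_ball (delta \<omega>0 + 1)"
    using Omega_imp_antimono_l2_ball(1,2)[of a b g1 g2] \<omega> by (auto simp only: \<omega>_eq)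
  with last2 show ?thesis
    by (simp add: \<omega>_eq dist_commute)
qed

lemma E_locally_uniform:
  assumes \<omega>0: "\<omega>0 \<in> Omega" and K: "compact K" and e: "0 < e"
  shows "\<exists>\<eta>>0. \<forall>\<omega>\<in>Omega. dist (Omega_coords \<omega>) (Omega_coords \<omega>0) < \<eta> \<longrightarrow>
           (\<forall>z\<in>K. cmod (E \<omega> z - E \<omega>0 z) < e)"
proof -
  define D where "D = delta \<omega>0 + 1"
  define C where "C = antimono_l2_ball D \<times> antimono_l2_ball D \<times> cball (snd (snd (Omega_coords \<omega>0))) 1"
  have "compact C"
    unfolding C_def by (intro compact_Times compact_antimono_l2_ball compact_cball)
  moreover have "continuous_on (C \<times> K) (\<lambda>y. E_coords (fst y) (snd y))"
    by (rule continuous_on_subset[OF continuous_on_E_coords]) (auto simp: C_def)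
  ultimately obtain \<eta> where "0 < \<eta>" and \<eta>: "\<forall>p\<in>C. \<forall>p0\<in>C. dist p p0 < \<eta>
      \<longrightarrow> (\<forall>z\<in>K. dist (E_coords p z) (E_coords p0 z) < e)"
    using compact_Times_uniform_in_parameter[OF _ K _ e] by blast
  show ?thesis
  proof (intro exI[of _ "min \<eta> 1"] conjI ballI impI)
    fix \<omega> z assume "\<omega> \<in> Omega" and near: "dist (Omega_coords \<omega>) (Omega_coords \<omega>0) < min \<eta> 1" and "z \<in> K"
    have "Omega_coords \<omega> \<in> C" "Omega_coords \<omega>0 \<in> C"
      using Omega_coords_in_compact_nbhd[OF \<open>\<omega> \<in> Omega\<close> \<omega>0] Omega_coords_in_compact_nbhd[OF \<omega>0 \<omega>0] near
      by (simp_all add: C_def D_def)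
    with \<eta> near \<open>z \<in> K\<close> have "dist (E_coords (Omega_coords \<omega>) z) (E_coords (Omega_coords \<omega>0) z) < e"
      by simp
    then show "cmod (E \<omega> z - E \<omega>0 z) < e"
      using E_eq_E_coords \<open>\<omega> \<in> Omega\<close> \<omega>0 by (simp add: dist_norm)
  qed (use \<open>0 < \<eta>\<close> in simp)
qed

lemma continuous_map_E: "continuous_map Omega_top LP_top E"
  unfolding LP_top_def
proof (rule continuous_map_into_subtopology)
  show "E \<in> topspace Omega_top \<rightarrow> LP"
    by (auto simp: LP_def)
  show "continuous_map Omega_top compact_uniform_top E"
  proof (rule continuous_map_compact_uniform_topI)
    fix \<omega>0 and K :: "complex set" and e :: real
    assume "\<omega>0 \<in> topspace Omega_top" "compact K" "0 < e"
    then obtain \<eta> where "0 < \<eta>" and \<eta>: "\<And>\<omega>. \<omega> \<in> Omega \<Longrightarrow> dist (Omega_coords \<omega>) (Omega_coords \<omega>0) < \<eta>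
        \<Longrightarrow> \<forall>z\<in>K. cmod (E \<omega> z - E \<omega>0 z) < e"
      using E_locally_uniform by (metis topspace_Omega_top)
    define W where "W = Omega_coords -` ball (Omega_coords \<omega>0) \<eta> \<inter> Omega"
    have "openin Omega_top W"
      unfolding Omega_top_def openin_pullback_topology W_def by auto
    moreover have "\<omega>0 \<in> W"
      using \<open>0 < \<eta>\<close> \<open>\<omega>0 \<in> topspace Omega_top\<close> by (simp add: W_def)
    moreover have "\<forall>\<omega>\<in>W. \<forall>z\<in>K. cmod (E \<omega> z - E \<omega>0 z) < e"
      using \<eta> by (auto simp: W_def dist_commute)
    ultimately show "\<exists>W. openin Omega_top W \<and> \<omega>0 \<in> W \<and> (\<forall>\<omega>\<in>W. \<forall>z\<in>K. cmod (E \<omega> z - E \<omega>0 z) < e)"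
      by blast
  qed
qed

lemma continuous_on_E:
  assumes "\<omega> \<in> Omega"
  shows "continuous_on UNIV (E \<omega>)"
proof -
  obtain a b g1 g2 where \<omega>: "\<omega> = (a, b, g1, g2)"
    by (cases \<omega>)
  have "Omega_coords \<omega> \<in> antimono_l2_ball (delta \<omega>) \<times> antimono_l2_ball (delta \<omega>) \<times> UNIV"
    using Omega_imp_antimono_l2_ball assms by (simp add: \<omega>)
  then have "continuous_on UNIV (\<lambda>z. E_coords (Omega_coords \<omega>) z)"
    by (intro continuous_on_compose2[OF continuous_on_E_coords, of _ "\<lambda>z. (Omega_coords \<omega>, z)", simplified])
      (auto intro: continuous_on_Pair continuous_on_const continuous_on_id)
  then show ?thesis
    using E_eq_E_coords[OF assms] by simp
qed

section \<open>Injectivity of \<open>E\<close>\<close>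

lemma continuous_eq_off_finite:
  fixes f g :: "'a::{real_normed_vector, perfect_space} \<Rightarrow> 'b::t2_space"
  assumes "continuous_on UNIV f" "continuous_on UNIV g" "finite S" "\<And>x. x \<notin> S \<Longrightarrow> f x = g x"
  shows "f = g"
proof -
  have "closure (- S) \<subseteq> {x. f x = g x}"
    using assms by (intro closure_minimal closed_Collect_eq) auto
  moreover have "closure (- S) = UNIV"
    using empty_interior_finite[OF assms(3)] by (simp add: closure_complement)
  ultimately show ?thesis
    by auto
qed

lemma tail_in_Omega:
  "(a, b, g1, g2) \<in> Omega \<Longrightarrow> (\<lambda>k. a (Suc k), \<lambda>k. b (Suc k), g1, g2) \<in> Omega"
  by (simp add: mem_Omega antimono_def summable_Suc_iff[where f = "\<lambda>k. (a k)\<^sup>2"]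
      summable_Suc_iff[where f = "\<lambda>k. (b k)\<^sup>2"])

lemma reflect_in_Omega: "(a, b, g1, g2) \<in> Omega \<Longrightarrow> (b, a, - g1, g2) \<in> Omega"
  by (auto simp: mem_Omega)

lemma E_reflect: "E (b, a, - g1, g2) z = E (a, b, g1, g2) (- z)"
  by (simp add: E_def mult_ac)

lemma prodinf_eq_mult_prodinf_Suc:
  fixes f :: "nat \<Rightarrow> 'a::real_normed_field"
  assumes "convergent_prod f"
  shows "prodinf f = f 0 * (\<Prod>k. f (Suc k))"
proof -
  have "f has_prod (f 0 * (\<Prod>k. f (Suc k)))"
    using has_prod_ignore_initial_segment'[OF assms, where n = 1] by simp
  then show ?thesis
    by (rule sym[OF has_prod_unique])
qed

lemma E_split_head:
  assumes "(a, b, g1, g2) \<in> Omega"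
  shows "E (a, b, g1, g2) z = weierstrass_factor 1 (z * of_real (a 0)) * weierstrass_factor 1 (- z * of_real (b 0))
    * E (\<lambda>k. a (Suc k), \<lambda>k. b (Suc k), g1, g2) z"
proof -
  have a: "a \<in> antimono_l2_ball (delta (a, b, g1, g2))" and b: "b \<in> antimono_l2_ball (delta (a, b, g1, g2))"
    using Omega_imp_antimono_l2_ball[OF assms] by simp_all
  show ?thesis
    unfolding E_eq_weierstrass_factor
    using prodinf_eq_mult_prodinf_Suc[OF convergent_prod_weierstrass_factor_1[OF a, of z]]
      prodinf_eq_mult_prodinf_Suc[OF convergent_prod_weierstrass_factor_1[OF b, of "- z"]]
    by (simp add: mult_ac)
qed

lemma E_of_real_eq_0_iff:
  assumes "(a, b, g1, g2) \<in> Omega"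
  shows "E (a, b, g1, g2) (of_real x) = 0 \<longleftrightarrow> (\<exists>k. x * a k = 1) \<or> (\<exists>k. x * b k = - 1)"
proof -
  have prod_eq_0: "(\<Prod>k. weierstrass_factor 1 (z * of_real (c k))) = 0 \<longleftrightarrow> (\<exists>k. z * of_real (c k) = 1)"
    if "c \<in> antimono_l2_ball (delta (a, b, g1, g2))" for c z
  proof -
    have "(\<Prod>k. weierstrass_factor 1 (z * of_real (c k))) = 0
        \<longleftrightarrow> 0 \<in> range (\<lambda>k. weierstrass_factor 1 (z * of_real (c k)))"
      by (rule has_prod_eq_0_iff[OF convergent_prod_has_prod[OF convergent_prod_weierstrass_factor_1[OF that]]])
    also have "\<dots> \<longleftrightarrow> (\<exists>k. weierstrass_factor 1 (z * of_real (c k)) = 0)"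
      by (metis (mono_tags, lifting) rangeE rangeI)
    finally show ?thesis
      by simp
  qed
  have "(\<Prod>k. weierstrass_factor 1 (of_real x * of_real (a k))) = 0 \<longleftrightarrow> (\<exists>k. x * a k = 1)"
    using prod_eq_0[of a "of_real x"] Omega_imp_antimono_l2_ball(1)[OF assms]
    by (simp only: of_real_mult[symmetric] of_real_eq_1_iff)
  moreover have "(\<Prod>k. weierstrass_factor 1 (- of_real x * of_real (b k))) = 0 \<longleftrightarrow> (\<exists>k. x * b k = - 1)"
  proof -
    have "- of_real x * of_real (b k) = (1::complex) \<longleftrightarrow> x * b k = - 1" for k
      by (metis minus_mult_left minus_equation_iff of_real_eq_1_iff of_real_minus of_real_mult)
    then show ?thesis
      using prod_eq_0[of b "- of_real x"] Omega_imp_antimono_l2_ball(2)[OF assms] by simp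
  qed
  ultimately show ?thesis
    unfolding E_eq_weierstrass_factor by simp
qed

lemma E_of_real_ne_0:
  assumes \<omega>: "(a, b, g1, g2) \<in> Omega" and x: "\<bar>x\<bar> * (a 0 + b 0) < 1"
  shows "E (a, b, g1, g2) (of_real x) \<noteq> 0"
proof -
  have "x * a k < 1" "- 1 < x * b k" for k
  proof -
    have "0 \<le> a k" "a k \<le> a 0" "0 \<le> b k" "b k \<le> b 0"
      using \<omega> by (auto simp: mem_Omega antimono_def)
    then have "\<bar>x\<bar> * a k \<le> \<bar>x\<bar> * (a 0 + b 0)" "\<bar>x\<bar> * b k \<le> \<bar>x\<bar> * (a 0 + b 0)"
      by (simp_all add: mult_left_mono)
    moreover have "\<bar>x * a k\<bar> = \<bar>x\<bar> * a k" "\<bar>x * b k\<bar> = \<bar>x\<bar> * b k"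
      using \<open>0 \<le> a k\<close> \<open>0 \<le> b k\<close> by (simp_all add: abs_mult)
    ultimately show "x * a k < 1" "- 1 < x * b k"
      using x abs_ge_self[of "x * a k"] abs_ge_minus_self[of "x * b k"] by linarith+
  qed
  then have "x * a k \<noteq> 1" "x * b k \<noteq> - 1" for k
    by (metis less_irrefl)+
  then show ?thesis
    by (simp add: E_of_real_eq_0_iff[OF \<omega>])
qed

lemma E_eq_imp_head_le:
  assumes \<omega>: "(a, b, g1, g2) \<in> Omega" and \<omega>': "(a', b', g1', g2') \<in> Omega"
    and eq: "E (a, b, g1, g2) = E (a', b', g1', g2')"
  shows "a 0 \<le> a' 0"
proof (rule ccontr)
  assume "\<not> a 0 \<le> a' 0"
  moreover have a': "0 \<le> a' k" "a' k \<le> a' 0" and b': "0 \<le> b' k" for k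
    using \<omega>' by (auto simp: mem_Omega antimono_def)
  ultimately have "0 < a 0" and lt: "a' 0 < a 0"
    using a'(1)[of 0] by linarith+
  define x where "x = 1 / a 0"
  have "0 < x" "x * a 0 = 1"
    using \<open>0 < a 0\<close> by (simp_all add: x_def)
  have "x * a' k < 1" "- 1 < x * b' k" for k
  proof -
    have "x * a' k \<le> x * a' 0" "x * a' 0 < x * a 0" "0 \<le> x * b' k"
      using a' b' lt \<open>0 < x\<close> by (simp_all add: mult_left_mono)
    then show "x * a' k < 1" "- 1 < x * b' k"
      using \<open>x * a 0 = 1\<close> by linarith+
  qed
  then have "x * a' k \<noteq> 1" "x * b' k \<noteq> - 1" for k
    by (metis less_irrefl)+
  then have "E (a', b', g1', g2') (of_real x) \<noteq> 0"
    by (simp add: E_of_real_eq_0_iff[OF \<omega>'])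
  moreover have "E (a, b, g1, g2) (of_real x) = 0"
    using E_of_real_eq_0_iff[OF \<omega>] \<open>x * a 0 = 1\<close> by blast
  ultimately show False
    using eq by simp
qed

lemma E_eq_imp_head_eq:
  assumes \<omega>: "(a, b, g1, g2) \<in> Omega" and \<omega>': "(a', b', g1', g2') \<in> Omega"
    and eq: "E (a, b, g1, g2) = E (a', b', g1', g2')"
  shows "a 0 = a' 0 \<and> b 0 = b' 0"
proof -
  have "E (b, a, - g1, g2) = E (b', a', - g1', g2')"
    using eq by (simp add: E_reflect fun_eq_iff)
  then show ?thesis
    using E_eq_imp_head_le[OF \<omega> \<omega>' eq] E_eq_imp_head_le[OF \<omega>' \<omega> eq[symmetric]]
      E_eq_imp_head_le[OF reflect_in_Omega[OF \<omega>] reflect_in_Omega[OF \<omega>']]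
      E_eq_imp_head_le[OF reflect_in_Omega[OF \<omega>'] reflect_in_Omega[OF \<omega>]]
    by (simp add: eq_commute)
qed

lemma weierstrass_factor_1_ne_0: "z \<noteq> inverse c \<Longrightarrow> weierstrass_factor 1 (z * c) \<noteq> 0"
  by (metis inverse_unique mult.commute weierstrass_factor_eq_0_iff)

lemma E_eq_imp_tail_eq:
  assumes \<omega>: "(a, b, g1, g2) \<in> Omega" and \<omega>': "(a', b', g1', g2') \<in> Omega"
    and eq: "E (a, b, g1, g2) = E (a', b', g1', g2')" and a0: "a 0 = a' 0" and b0: "b 0 = b' 0"
  shows "E (\<lambda>k. a (Suc k), \<lambda>k. b (Suc k), g1, g2) = E (\<lambda>k. a' (Suc k), \<lambda>k. b' (Suc k), g1', g2')"
proof (rule continuous_eq_off_finite)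
  show "continuous_on UNIV (E (\<lambda>k. a (Suc k), \<lambda>k. b (Suc k), g1, g2))"
    "continuous_on UNIV (E (\<lambda>k. a' (Suc k), \<lambda>k. b' (Suc k), g1', g2'))"
    using \<omega> \<omega>' by (simp_all add: continuous_on_E tail_in_Omega)
  show "finite {inverse (of_real (a 0)), - inverse (of_real (b 0)) :: complex}"
    by simp
  fix z :: complex
  assume "z \<notin> {inverse (of_real (a 0)), - inverse (of_real (b 0))}"
  then have "z \<noteq> inverse (of_real (a 0))" "- z \<noteq> inverse (of_real (b 0))"
    by (metis insertCI minus_minus)+
  then have c: "weierstrass_factor 1 (z * of_real (a 0)) * weierstrass_factor 1 (- z * of_real (b 0)) \<noteq> 0"
    by (intro no_zero_divisors weierstrass_factor_1_ne_0)
  have "weierstrass_factor 1 (z * of_real (a 0)) * weierstrass_factor 1 (- z * of_real (b 0))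
      * E (\<lambda>k. a (Suc k), \<lambda>k. b (Suc k), g1, g2) z = E (a, b, g1, g2) z"
    by (rule E_split_head[OF \<omega>, symmetric])
  also have "\<dots> = E (a', b', g1', g2') z"
    by (simp add: eq)
  also have "\<dots> = weierstrass_factor 1 (z * of_real (a 0)) * weierstrass_factor 1 (- z * of_real (b 0))
      * E (\<lambda>k. a' (Suc k), \<lambda>k. b' (Suc k), g1', g2') z"
    unfolding a0 b0 by (rule E_split_head[OF \<omega>'])
  finally show "E (\<lambda>k. a (Suc k), \<lambda>k. b (Suc k), g1, g2) z = E (\<lambda>k. a' (Suc k), \<lambda>k. b' (Suc k), g1', g2') z"
    using c by simp
qed

lemma E_eq_imp_coeff_eq:
  assumes "(a, b, g1, g2) \<in> Omega" "(a', b', g1', g2') \<in> Omega" "E (a, b, g1, g2) = E (a', b', g1', g2')"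
  shows "a k = a' k \<and> b k = b' k"
  using assms
proof (induction k arbitrary: a b a' b')
  case 0
  then show ?case
    by (rule E_eq_imp_head_eq)
next
  case (Suc k)
  then have "E (\<lambda>k. a (Suc k), \<lambda>k. b (Suc k), g1, g2) = E (\<lambda>k. a' (Suc k), \<lambda>k. b' (Suc k), g1', g2')"
    using E_eq_imp_head_eq E_eq_imp_tail_eq by blast
  with Suc.prems show ?case
    using Suc.IH[OF tail_in_Omega tail_in_Omega] by blast
qed

lemma E_eq_imp_exponent_eq:
  assumes \<omega>: "(a, b, g1, g2) \<in> Omega" and eq: "E (a, b, g1, g2) = E (a, b, g1', g2')"
    and nz: "E (a, b, g1, g2) (of_real x) \<noteq> 0"
  shows "g1 * x + g2 / 2 * x\<^sup>2 = g1' * x + g2' / 2 * x\<^sup>2"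
proof -
  define P where "P = (\<Prod>k. weierstrass_factor 1 (of_real x * of_real (a k)))
    * (\<Prod>k. weierstrass_factor 1 (- of_real x * of_real (b k)))"
  have E_x: "E (a, b, h1, h2) (of_real x) = of_real (exp (- (h1 * x + h2 / 2 * x\<^sup>2))) * P" for h1 h2
    unfolding E_eq_weierstrass_factor P_def by (simp add: mult.assoc flip: exp_of_real)
  have "P \<noteq> 0"
    using nz by (simp add: E_x)
  with eq have "exp (- (g1 * x + g2 / 2 * x\<^sup>2)) = exp (- (g1' * x + g2' / 2 * x\<^sup>2))"
    by (metis E_x mult_cancel_right of_real_eq_iff)
  then show ?thesis
    by simp
qed

lemma inj_on_E: "inj_on E Omega"
proof (rule inj_onI)
  fix \<omega> \<omega>' assume \<Omega>: "\<omega> \<in> Omega" "\<omega>' \<in> Omega" and eq: "E \<omega> = E \<omega>'"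
  obtain a b g1 g2 a' b' g1' g2' where \<omega>: "\<omega> = (a, b, g1, g2)" and \<omega>': "\<omega>' = (a', b', g1', g2')"
    by (cases \<omega>, cases \<omega>')
  have "a = a'" "b = b'"
    using E_eq_imp_coeff_eq \<Omega> eq by (simp_all add: \<omega> \<omega>' fun_eq_iff)
  define t where "t = 1 / (1 + a 0 + b 0)"
  have "0 \<le> a 0" "0 \<le> b 0"
    using \<Omega> by (simp_all add: \<omega> mem_Omega)
  then have "0 < t" "\<bar>t\<bar> * (a 0 + b 0) < 1" "\<bar>- t\<bar> * (a 0 + b 0) < 1"
    by (simp_all add: t_def field_simps)
  then have "g1 * x + g2 / 2 * x\<^sup>2 = g1' * x + g2' / 2 * x\<^sup>2" if "x = t \<or> x = - t" for x
    using \<Omega> eq that by (intro E_eq_imp_exponent_eq E_of_real_ne_0) (auto simp: \<omega> \<omega>' \<open>a = a'\<close> \<open>b = b'\<close>)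
  from this[of t] this[of "- t"] have e1: "g1 * t + g2 / 2 * t\<^sup>2 = g1' * t + g2' / 2 * t\<^sup>2"
    and e2: "- (g1 * t) + g2 / 2 * t\<^sup>2 = - (g1' * t) + g2' / 2 * t\<^sup>2"
    by simp_all
  then have "g1 * t = g1' * t" "g2 / 2 * t\<^sup>2 = g2' / 2 * t\<^sup>2"
    by linarith+
  with \<open>0 < t\<close> have "g1 = g1'" "g2 = g2'"
    by simp_all
  then show "\<omega> = \<omega>'"
    by (simp add: \<omega> \<omega>' \<open>a = a'\<close> \<open>b = b'\<close>)
qed

theorem proposition5p6:
  shows "E \<in> borel_of Omega_top \<rightarrow>\<^sub>M borel_of LP_top
    \<and> (\<forall>\<nu>\<in>Mp Omega_top. distr \<nu> (borel_of LP_top) E \<in> Mp LP_top)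
    \<and> bij_betw (\<lambda>\<nu>. distr \<nu> (borel_of LP_top) E) (Mp Omega_top) (Mp LP_top)"
proof -
  have "bij_betw E (topspace Omega_top) (topspace LP_top)"
    using inj_on_E by (simp add: bij_betw_def LP_def)
  then show ?thesis
    by (rule bij_betw_distr_Mp[OF continuous_map_E _ compactin_Omega_bounded Union_Omega_bounded
        Hausdorff_space_LP_top])
qed

end
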